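(* Let $\mathbf{U}^{(j)}\in\mathbb{C}^{n_j\times n_j}$ be unitary for $j\in[d]$, let $\mathcal{S}\subset[n_1]\times\cdots\times[n_d]$ be a set of $r$ indices, and let $$\mathcal{L}_{\rm Tucker}:=\{\mathcal{C}\times_1\mathbf{U}^{(1)}\cdots\times_d\mathbf{U}^{(d)}:\mathcal{C}\in\mathbb{C}^{n_1\times\cdots\times n_d},\ \mathcal{C}_{\mathbf{i}}=0\text{ for all }\mathbf{i}\notin\mathcal{S}\}.$$ Every $\mathcal{Y}\in\mathcal{L}_{\rm Tucker}$ is written in standard form $\mathcal{Y}=\sum_{\mathbf{i}=(i_1,\dots,i_d)\in\mathcal{S}}\mathcal{C}_{\mathbf{i}}\bigcirc_{\ell=1}^d\mathbf{U}^{(\ell)}_{i_\ell}$ over the basis $\mathcal{B}=\{\bigcirc_{\ell=1}^d\mathbf{U}^{(\ell)}_{i_\ell}:\mathbf{i}\in\mathcal{S}\}$, where $\mathbf{U}^{(\ell)}_{i}$ is the $i$-th column of $\mathbf{U}^{(\ell)}$. Let $\epsilon\in(0,3/4]$ and for each $j\in[d]$ let $\mathbf{A}_j\in\mathbb{C}^{m_j\times n_j}$ be an $(\epsilon/4d)$-JL embedding into $\mathbb{C}^{m_j}$ of the set of $2r^2-r$ vectors $\bigcup_{k\ne h}\{\mathbf{y}^{(j)}_k\pm\mathbf{y}^{(j)}_h,\mathbf{y}^{(j)}_k\pm\mathrm{i}\,\mathbf{y}^{(j)}_h\}\cup\{\mathbf{y}^{(j)}_k\}_k$, where $\{\mathbf{y}^{(j)}_k\}_{k\in[r]}$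 are the mode-$j$ factor vectors $\mathbf{U}^{(j)}_{i_j}$ of the $r$ basis tensors. Then for every $\mathcal{Y}\in\mathcal{L}_{\rm Tucker}$, $$\big|\|\mathcal{Y}\|^2-\|\mathcal{Y}\times_1\mathbf{A}_1\cdots\times_d\mathbf{A}_d\|^2\big|\le\epsilon'\|\mathcal{Y}\|^2,$$ where $$\epsilon':=\begin{cases}\big(\epsilon+e\sqrt{r(r-1)}\,\epsilon^d\big)e&\text{if }\mu_{\mathcal{B}}=0,\\ \epsilon\big(e+e^2\sqrt{r(r-1)}\max(\epsilon^{d-1},\mu_{\mathcal{B}}^{d-1})\big)&\text{otherwise.}\end{cases}$$
   Context: Tensors carry the inner product $\langle\mathcal{X},\mathcal{Y}\rangle=\sum\mathcal{X}_{i_1\dots i_d}\overline{\mathcal{Y}_{i_1\dots i_d}}$ and norm $\|\cdot\|$; $\bigcirc$ is the outer product; $(\mathcal{Z}\times_j\mathbf{U})_{i_1,\dots,\ell,\dots,i_d}=\sum_{i_j}\mathcal{Z}_{i_1,\dots,i_j,\dots,i_d}\mathbf{U}_{\ell,i_j}$; $\mathrm{i}$ is the imaginary unit, $e$ Euler's number. A matrix is an $\epsilon$-JL embedding of $S$ if $\|\mathbf{A}x\|_2^2=(1+\epsilon_x)\|x\|_2^2$ with $\epsilon_x\in(-\epsilon,\epsilon)$ for all $x\in S$. For a basis $\{\bigcirc_\ell\mathbf{y}^{(\ell)}_k\}_{k\in[r]}$ of unit-vector rank-one tensors, $\mu_{\mathcal{B}}=\max_{\ell\in[d]}\max_{k\ne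 h}|\langle\mathbf{y}^{(\ell)}_k,\mathbf{y}^{(\ell)}_h\rangle|$. *)

theory Defs
  imports Complex_Main "HOL-Library.FuncSet"
begin

text \<open>An order-d tensor with mode sizes n 0, ..., n (d-1) is a function
  from multi-indices (nat => nat) to complex; only its values on
  tidx d n = PiE {..<d} (%l. {..<n l}) are meaningful. Modes are numbered 0..d-1.
  A matrix M in C^{p x q} is a function nat => nat => complex, entry M a b for a<p, b<q.
  A vector in C^q is a function nat => complex, only entries b<q matter.\<close>

definition tidx :: "nat \<Rightarrow> (nat \<Rightarrow> nat) \<Rightarrow> (nat \<Rightarrow> nat) set" where
  "tidx d n = PiE {..<d} (\<lambda>l. {..<n l})"

definition tnorm2 :: "(nat \<Rightarrow> nat) set \<Rightarrow> ((nat \<Rightarrow> nat) \<Rightarrow> complex) \<Rightarrow> real" where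
  "tnorm2 I X = (\<Sum>i\<in>I. (cmod (X i))\<^sup>2)"

definition mode_prod :: "nat \<Rightarrow> nat \<Rightarrow> ((nat \<Rightarrow> nat) \<Rightarrow> complex) \<Rightarrow> (nat \<Rightarrow> nat \<Rightarrow> complex)
    \<Rightarrow> ((nat \<Rightarrow> nat) \<Rightarrow> complex)" where
  "mode_prod N j Z U = (\<lambda>i. \<Sum>k<N. Z (i(j := k)) * U (i j) k)"

fun multi_mode :: "(nat \<Rightarrow> nat) \<Rightarrow> (nat \<Rightarrow> nat \<Rightarrow> nat \<Rightarrow> complex) \<Rightarrow> ((nat \<Rightarrow> nat) \<Rightarrow> complex)
    \<Rightarrow> nat \<Rightarrow> ((nat \<Rightarrow> nat) \<Rightarrow> complex)" where
  "multi_mode n M Z 0 = Z"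
| "multi_mode n M Z (Suc j) = mode_prod (n j) j (multi_mode n M Z j) (M j)"

definition unitary_mat :: "nat \<Rightarrow> (nat \<Rightarrow> nat \<Rightarrow> complex) \<Rightarrow> bool" where
  "unitary_mat N U \<longleftrightarrow> (\<forall>a<N. \<forall>b<N. (\<Sum>k<N. cnj (U k a) * U k b) = (if a = b then 1 else 0))"

definition col :: "(nat \<Rightarrow> nat \<Rightarrow> complex) \<Rightarrow> nat \<Rightarrow> (nat \<Rightarrow> complex)" where
  "col U b = (\<lambda>a. U a b)"

definition vnorm2 :: "nat \<Rightarrow> (nat \<Rightarrow> complex) \<Rightarrow> real" where
  "vnorm2 N x = (\<Sum>a<N. (cmod (x a))\<^sup>2)"

definition vinner :: "nat \<Rightarrow> (nat \<Rightarrow> complex) \<Rightarrow> (nat \<Rightarrow> complex) \<Rightarrow> complex" where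
  "vinner N x y = (\<Sum>a<N. x a * cnj (y a))"

definition mat_vec :: "nat \<Rightarrow> (nat \<Rightarrow> nat \<Rightarrow> complex) \<Rightarrow> (nat \<Rightarrow> complex) \<Rightarrow> (nat \<Rightarrow> complex)" where
  "mat_vec N A x = (\<lambda>a. \<Sum>b<N. A a b * x b)"

definition JL_embedding :: "real \<Rightarrow> nat \<Rightarrow> nat \<Rightarrow> (nat \<Rightarrow> nat \<Rightarrow> complex) \<Rightarrow> (nat \<Rightarrow> complex) set \<Rightarrow> bool" where
  "JL_embedding eps p q A X \<longleftrightarrow>
     (\<forall>x\<in>X. \<exists>ex. -eps < ex \<and> ex < eps \<and> vnorm2 p (mat_vec q A x) = (1 + ex) * vnorm2 q x)"

definition JL_set :: "(nat \<Rightarrow> nat \<Rightarrow> complex) \<Rightarrow> nat \<Rightarrow> (nat \<Rightarrow> nat) set \<Rightarrow> (nat \<Rightarrow> complex) set" where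
  "JL_set U j S =
     (\<Union>i\<in>S. \<Union>i'\<in>S - {i}.
        {(\<lambda>a. col U (i j) a + col U (i' j) a), (\<lambda>a. col U (i j) a - col U (i' j) a),
         (\<lambda>a. col U (i j) a + \<i> * col U (i' j) a), (\<lambda>a. col U (i j) a - \<i> * col U (i' j) a)})
     \<union> (\<lambda>i. col U (i j)) ` S"

text \<open>Coherence mu_B of the basis {outer_l U^(l)_{i_l} : i in S} (0 if there is no pair k ~= h).\<close>
definition coherence :: "nat \<Rightarrow> (nat \<Rightarrow> nat) \<Rightarrow> (nat \<Rightarrow> nat \<Rightarrow> nat \<Rightarrow> complex) \<Rightarrow> (nat \<Rightarrow> nat) set \<Rightarrow> real" where
  "coherence d n U S = Max (insert 0
     {cmod (vinner (n l) (col (U l) (i l)) (col (U l) (i' l))) | l i i'. l < d \<and> i \<in> S \<and> i' \<in> S \<and> i \<noteq> i'})"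

definition tucker_space :: "nat \<Rightarrow> (nat \<Rightarrow> nat) \<Rightarrow> (nat \<Rightarrow> nat \<Rightarrow> nat \<Rightarrow> complex) \<Rightarrow> (nat \<Rightarrow> nat) set
    \<Rightarrow> ((nat \<Rightarrow> nat) \<Rightarrow> complex) set" where
  "tucker_space d n U S = {multi_mode n U C d | C. \<forall>i\<in>tidx d n - S. C i = 0}"

end

theory Submission
  imports Defs
begin

(*
  Expanding Y in the basis of rank-one tensors, Y = sum_s C_s outer_l U^(l)_(s_l), both ||Y||^2 and
  ||Y x_1 A_1 ... x_d A_d||^2 are sesquilinear forms in the coefficients C whose entries are products
  over the modes of inner products of the factor vectors, before and after applying A_l.  The columns
  of U^(l) are orthonormal, so the first form is sum_s |C_s|^2.  Polarization turns the JL property on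
  y_k, y_k +- y_h, y_k +- i y_h into an error of at most delta = eps/(4d) on every factor inner product;
  a product of d perturbed factors then moves by at most (1 + delta)^d - 1 on the diagonal and by
  (mu + 2 delta)^d - mu^d off it, and |C_s| |C_h| <= (|C_s|^2 + |C_h|^2)/2 bounds the off-diagonal
  part by r - 1 times sum_s |C_s|^2.  Elementary estimates of these two quantities give eps'.
*)

section \<open>Tensors as sums of rank-one tensors\<close>

lemma finite_tidx [simp]: "finite (tidx d p)"
  unfolding tidx_def by (auto intro!: finite_PiE)

lemma tidx_component_less: "s \<in> tidx d n \<Longrightarrow> l < d \<Longrightarrow> s l < n l"
  unfolding tidx_def by auto

lemma tidx_neq_imp_component_neq:
  assumes "s \<in> tidx d n" "s' \<in> tidx d n" "s \<noteq> s'"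
  obtains l where "l < d" "s l \<noteq> s' l"
  using assms unfolding tidx_def by (metis PiE_ext lessThan_iff)

lemma tnorm2_nonneg: "0 \<le> tnorm2 I X"
  unfolding tnorm2_def by (simp add: sum_nonneg)

lemma sum_PiE_insert:
  assumes "x \<notin> I"
  shows "(\<Sum>k\<in>PiE (insert x I) F. f k) = (\<Sum>t\<in>F x. \<Sum>k\<in>PiE I F. f (k(x := t)))"
proof -
  have "(\<Sum>k\<in>PiE (insert x I) F. f k) = (\<Sum>(t, k)\<in>F x \<times> PiE I F. f (k(x := t)))"
    unfolding PiE_insert_eq by (subst sum.reindex[OF inj_combinator[OF assms]]) (simp add: case_prod_unfold)
  then show ?thesis by (simp add: sum.cartesian_product)
qed

lemma multi_mode_eq_sum:
  "multi_mode p M Z j i = (\<Sum>k\<in>PiE {..<j} (\<lambda>l. {..<p l}).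
      Z (\<lambda>l. if l < j then k l else i l) * (\<Prod>l<j. M l (i l) (k l)))"
proof (induction j arbitrary: i)
  case 0
  then show ?case by simp
next
  case (Suc j)
  have "multi_mode p M Z (Suc j) i = (\<Sum>t<p j. multi_mode p M Z j (i(j := t)) * M j (i j) t)"
    by (simp add: mode_prod_def)
  also have "\<dots> = (\<Sum>t<p j. \<Sum>k\<in>PiE {..<j} (\<lambda>l. {..<p l}).
      Z (\<lambda>l. if l < Suc j then (k(j := t)) l else i l) * (\<Prod>l<Suc j. M l (i l) ((k(j := t)) l)))"
    unfolding Suc.IH sum_distrib_right
    by (intro sum.cong refl)
      (auto simp: prod.lessThan_Suc mult.assoc intro!: arg_cong2[where f = "(*)"] arg_cong[where f = Z] prod.cong)
  also have "\<dots> = (\<Sum>k\<in>PiE {..<Suc j} (\<lambda>l. {..<p l}).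
      Z (\<lambda>l. if l < Suc j then k l else i l) * (\<Prod>l<Suc j. M l (i l) (k l)))"
    by (simp add: lessThan_Suc sum_PiE_insert)
  finally show ?case .
qed

lemma multi_mode_eq_sum_tidx:
  assumes "i \<in> tidx d q"
  shows "multi_mode p M Z d i = (\<Sum>k\<in>tidx d p. Z k * (\<Prod>l<d. M l (i l) (k l)))"
  unfolding multi_mode_eq_sum tidx_def
proof (intro sum.cong refl)
  fix k assume "k \<in> PiE {..<d} (\<lambda>l. {..<p l})"
  then have "(\<lambda>l. if l < d then k l else i l) = k"
    using assms unfolding tidx_def by (auto simp: fun_eq_iff PiE_def extensional_def)
  then show "Z (\<lambda>l. if l < d then k l else i l) * (\<Prod>l<d. M l (i l) (k l)) = Z k * (\<Prod>l<d. M l (i l) (k l))"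
    by simp
qed

definition outer_prod :: "nat \<Rightarrow> (nat \<Rightarrow> nat \<Rightarrow> complex) \<Rightarrow> (nat \<Rightarrow> nat) \<Rightarrow> complex" where
  "outer_prod d v = (\<lambda>i. \<Prod>l<d. v l (i l))"

lemma multi_mode_outer_prod_sum:
  assumes Z: "\<forall>k\<in>tidx d p. Z k = (\<Sum>s\<in>S. c s * outer_prod d (v s) k)" and i: "i \<in> tidx d q"
  shows "multi_mode p M Z d i = (\<Sum>s\<in>S. c s * outer_prod d (\<lambda>l. mat_vec (p l) (M l) (v s l)) i)"
proof -
  have "multi_mode p M Z d i = (\<Sum>k\<in>tidx d p. \<Sum>s\<in>S. c s * (\<Prod>l<d. M l (i l) (k l) * v s l (k l)))"
    unfolding multi_mode_eq_sum_tidx[OF i]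
    by (intro sum.cong refl) (simp add: Z sum_distrib_left outer_prod_def prod.distrib mult_ac)
  also have "\<dots> = (\<Sum>s\<in>S. c s * (\<Sum>k\<in>tidx d p. \<Prod>l<d. M l (i l) (k l) * v s l (k l)))"
    by (subst sum.swap) (simp add: sum_distrib_left)
  also have "\<dots> = (\<Sum>s\<in>S. c s * outer_prod d (\<lambda>l. mat_vec (p l) (M l) (v s l)) i)"
    unfolding outer_prod_def mat_vec_def tidx_def by (subst prod_sum_PiE) auto
  finally show ?thesis .
qed

lemma tnorm2_outer_prod_sum:
  "complex_of_real (tnorm2 (tidx d p) (\<lambda>i. \<Sum>s\<in>S. c s * outer_prod d (w s) i))
     = (\<Sum>s\<in>S. \<Sum>s'\<in>S. c s * cnj (c s') * (\<Prod>l<d. vinner (p l) (w s l) (w s' l)))"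
proof -
  have "complex_of_real (tnorm2 (tidx d p) (\<lambda>i. \<Sum>s\<in>S. c s * outer_prod d (w s) i))
     = (\<Sum>i\<in>tidx d p. \<Sum>s\<in>S. \<Sum>s'\<in>S. c s * cnj (c s') * (\<Prod>l<d. w s l (i l) * cnj (w s' l (i l))))"
    unfolding tnorm2_def of_real_sum complex_norm_square cnj_sum sum_product
    by (intro sum.cong refl) (simp add: outer_prod_def prod.distrib cnj_prod mult_ac)
  also have "\<dots> = (\<Sum>s\<in>S. \<Sum>s'\<in>S. c s * cnj (c s') * (\<Sum>i\<in>tidx d p. \<Prod>l<d. w s l (i l) * cnj (w s' l (i l))))"
    by (subst sum.swap) (simp add: sum.swap[of _ "tidx d p"] sum_distrib_left)
  also have "\<dots> = (\<Sum>s\<in>S. \<Sum>s'\<in>S. c s * cnj (c s') * (\<Prod>l<d. vinner (p l) (w s l) (w s' l)))"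
    unfolding vinner_def tidx_def by (subst prod_sum_PiE) auto
  finally show ?thesis .
qed

lemma tnorm2_outer_prod_sum_orthonormal:
  assumes "finite S" "\<And>s s'. s \<in> S \<Longrightarrow> s' \<in> S \<Longrightarrow> (\<Prod>l<d. vinner (p l) (w s l) (w s' l)) = of_bool (s = s')"
  shows "tnorm2 (tidx d p) (\<lambda>i. \<Sum>s\<in>S. c s * outer_prod d (w s) i) = (\<Sum>s\<in>S. (cmod (c s))\<^sup>2)"
proof -
  have "complex_of_real (tnorm2 (tidx d p) (\<lambda>i. \<Sum>s\<in>S. c s * outer_prod d (w s) i)) = (\<Sum>s\<in>S. c s * cnj (c s))"
    unfolding tnorm2_outer_prod_sum using assms by (simp cong: sum.cong)
  also have "\<dots> = complex_of_real (\<Sum>s\<in>S. (cmod (c s))\<^sup>2)"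
    unfolding of_real_sum complex_norm_square ..
  finally show ?thesis by (simp only: of_real_eq_iff)
qed

section \<open>Polarization and JL embeddings\<close>

lemma vnorm2_nonneg: "0 \<le> vnorm2 N x"
  unfolding vnorm2_def by (intro sum_nonneg) simp

lemma vinner_self: "vinner N x x = complex_of_real (vnorm2 N x)"
  unfolding vinner_def vnorm2_def of_real_sum complex_norm_square by simp

lemma complex_polarization:
  "4 * (x * cnj y) = complex_of_real ((cmod (x + y))\<^sup>2) - complex_of_real ((cmod (x - y))\<^sup>2)
     + \<i> * complex_of_real ((cmod (x + \<i> * y))\<^sup>2) - \<i> * complex_of_real ((cmod (x - \<i> * y))\<^sup>2)"
  unfolding complex_norm_square by (simp add: algebra_simps)

lemma complex_parallelogram4:
  "(cmod (x + y))\<^sup>2 + (cmod (x - y))\<^sup>2 + (cmod (x + \<i> * y))\<^sup>2 + (cmod (x - \<i> * y))\<^sup>2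
     = 4 * ((cmod x)\<^sup>2 + (cmod y)\<^sup>2)"
proof -
  have "complex_of_real ((cmod (x + y))\<^sup>2 + (cmod (x - y))\<^sup>2 + (cmod (x + \<i> * y))\<^sup>2 + (cmod (x - \<i> * y))\<^sup>2)
     = complex_of_real (4 * ((cmod x)\<^sup>2 + (cmod y)\<^sup>2))"
    unfolding of_real_add of_real_mult complex_norm_square by (simp add: algebra_simps)
  then show ?thesis by (simp only: of_real_eq_iff)
qed

lemma vinner_polarization:
  "4 * vinner N x y = complex_of_real (vnorm2 N (\<lambda>a. x a + y a)) - complex_of_real (vnorm2 N (\<lambda>a. x a - y a))
     + \<i> * complex_of_real (vnorm2 N (\<lambda>a. x a + \<i> * y a)) - \<i> * complex_of_real (vnorm2 N (\<lambda>a. x a - \<i> * y a))"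
  unfolding vinner_def vnorm2_def of_real_sum sum_distrib_left complex_polarization
    sum_subtractf[symmetric] sum.distrib[symmetric]
  by (simp add: algebra_simps)

lemma vnorm2_parallelogram4:
  "vnorm2 N (\<lambda>a. x a + y a) + vnorm2 N (\<lambda>a. x a - y a) + vnorm2 N (\<lambda>a. x a + \<i> * y a)
     + vnorm2 N (\<lambda>a. x a - \<i> * y a) = 4 * (vnorm2 N x + vnorm2 N y)"
  unfolding vnorm2_def sum.distrib[symmetric] sum_distrib_left complex_parallelogram4 by simp

lemma mat_vec_linear:
  "mat_vec N A (\<lambda>a. x a + y a) = (\<lambda>a. mat_vec N A x a + mat_vec N A y a)"
  "mat_vec N A (\<lambda>a. x a - y a) = (\<lambda>a. mat_vec N A x a - mat_vec N A y a)"
  "mat_vec N A (\<lambda>a. c * x a) = (\<lambda>a. c * mat_vec N A x a)"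
  unfolding mat_vec_def by (auto simp: algebra_simps sum.distrib sum_subtractf sum_distrib_left)

lemma norm_diff_add_diff_le:
  fixes a b c d :: "'a::real_normed_vector"
  shows "norm (a - b + c - d) \<le> norm a + norm b + norm c + norm d"
  by (smt (verit) norm_triangle_ineq norm_triangle_ineq4)

lemma JL_embedding_vnorm2_error:
  assumes "JL_embedding \<delta> M N A X" "x \<in> X"
  shows "\<bar>vnorm2 M (mat_vec N A x) - vnorm2 N x\<bar> \<le> \<delta> * vnorm2 N x"
proof -
  obtain e where "- \<delta> < e" "e < \<delta>" "vnorm2 M (mat_vec N A x) = (1 + e) * vnorm2 N x"
    using assms unfolding JL_embedding_def by blast
  then show ?thesis
    using vnorm2_nonneg[of N x] by (simp add: algebra_simps abs_mult mult_right_mono)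
qed

lemma JL_embedding_vinner_error:
  assumes JL: "JL_embedding \<delta> M N A X"
    and X: "{(\<lambda>a. x a + y a), (\<lambda>a. x a - y a), (\<lambda>a. x a + \<i> * y a), (\<lambda>a. x a - \<i> * y a)} \<subseteq> X"
  shows "cmod (vinner M (mat_vec N A x) (mat_vec N A y) - vinner N x y) \<le> \<delta> * (vnorm2 N x + vnorm2 N y)"
proof -
  define err where "err z = vnorm2 M (mat_vec N A z) - vnorm2 N z" for z
  have err: "\<bar>err z\<bar> \<le> \<delta> * vnorm2 N z" if "z \<in> X" for z
    unfolding err_def using JL_embedding_vnorm2_error[OF JL that] .
  have pol: "4 * (vinner M (mat_vec N A x) (mat_vec N A y) - vinner N x y)
      = complex_of_real (err (\<lambda>a. x a + y a)) - complex_of_real (err (\<lambda>a. x a - y a))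
        + \<i> * complex_of_real (err (\<lambda>a. x a + \<i> * y a)) - \<i> * complex_of_real (err (\<lambda>a. x a - \<i> * y a))"
    unfolding right_diff_distrib vinner_polarization mat_vec_linear err_def by (simp add: algebra_simps)
  have "4 * cmod (vinner M (mat_vec N A x) (mat_vec N A y) - vinner N x y)
      \<le> \<bar>err (\<lambda>a. x a + y a)\<bar> + \<bar>err (\<lambda>a. x a - y a)\<bar> + \<bar>err (\<lambda>a. x a + \<i> * y a)\<bar> + \<bar>err (\<lambda>a. x a - \<i> * y a)\<bar>"
    using arg_cong[OF pol, of cmod] norm_diff_add_diff_le[of "complex_of_real (err (\<lambda>a. x a + y a))"
        "complex_of_real (err (\<lambda>a. x a - y a))" "\<i> * complex_of_real (err (\<lambda>a. x a + \<i> * y a))"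
        "\<i> * complex_of_real (err (\<lambda>a. x a - \<i> * y a))"]
    by (simp only: norm_mult norm_numeral norm_of_real norm_ii mult_1_left)
  also have "\<dots> \<le> \<delta> * (vnorm2 N (\<lambda>a. x a + y a) + vnorm2 N (\<lambda>a. x a - y a)
      + vnorm2 N (\<lambda>a. x a + \<i> * y a) + vnorm2 N (\<lambda>a. x a - \<i> * y a))"
    using err X by (simp add: distrib_left add_mono)
  finally show ?thesis unfolding vnorm2_parallelogram4 by (simp add: algebra_simps)
qed

section \<open>Perturbation of products and sesquilinear forms\<close>

lemma norm_prod_diff_le:
  fixes a b :: "nat \<Rightarrow> 'a::{real_normed_field}"
  assumes "\<And>l. l < k \<Longrightarrow> norm (a l - b l) \<le> e" "\<And>l. l < k \<Longrightarrow> norm (b l) \<le> \<beta>"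
    and "0 \<le> e" "0 \<le> \<beta>"
  shows "norm ((\<Prod>l<k. a l) - (\<Prod>l<k. b l)) \<le> (\<beta> + e) ^ k - \<beta> ^ k"
  using assms(1,2)
proof (induction k)
  case 0
  then show ?case by simp
next
  case (Suc k)
  let ?A = "\<Prod>l<k. a l" and ?B = "\<Prod>l<k. b l"
  have IH: "norm (?A - ?B) \<le> (\<beta> + e) ^ k - \<beta> ^ k" using Suc by auto
  have ak: "norm (a k) \<le> \<beta> + e"
    using Suc.prems(1)[of k] Suc.prems(2)[of k] norm_triangle_ineq[of "a k - b k" "b k"] by simp
  have Bk: "norm ?B \<le> \<beta> ^ k"
    unfolding prod_norm[symmetric] using Suc.prems(2) prod_mono[of "{..<k}" "\<lambda>l. norm (b l)" "\<lambda>_. \<beta>"] by simp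
  have "norm ((\<Prod>l<Suc k. a l) - (\<Prod>l<Suc k. b l)) = norm ((?A - ?B) * a k + ?B * (a k - b k))"
    by (simp add: algebra_simps)
  also have "\<dots> \<le> norm (?A - ?B) * norm (a k) + norm ?B * norm (a k - b k)"
    by (metis norm_mult norm_triangle_ineq)
  also have "\<dots> \<le> ((\<beta> + e) ^ k - \<beta> ^ k) * (\<beta> + e) + \<beta> ^ k * e"
    using Suc.prems(1)[of k] IH ak Bk assms(3,4) power_mono[of \<beta> "\<beta> + e" k]
    by (intro add_mono mult_mono) auto
  also have "\<dots> = (\<beta> + e) ^ Suc k - \<beta> ^ Suc k" by (simp add: algebra_simps)
  finally show ?case .
qed

lemma sum_off_diagonal_le:
  fixes f :: "'a \<Rightarrow> real"
  assumes "finite S"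
  shows "(\<Sum>s\<in>S. \<Sum>s'\<in>S - {s}. f s * f s') \<le> real (card S - 1) * (\<Sum>s\<in>S. (f s)\<^sup>2)"
proof -
  have "(\<Sum>s\<in>S. \<Sum>s'\<in>S - {s}. f s * f s') \<le> (\<Sum>s\<in>S. \<Sum>s'\<in>S - {s}. ((f s)\<^sup>2 + (f s')\<^sup>2) / 2)"
    using sum_squares_bound by (intro sum_mono) (simp add: field_simps mult.assoc)
  also have "\<dots> = (\<Sum>s\<in>S. \<Sum>s'\<in>S. ((f s)\<^sup>2 + (f s')\<^sup>2) / 2) - (\<Sum>s\<in>S. (f s)\<^sup>2)"
    using assms by (simp add: sum_diff1 sum_subtractf)
  also have "\<dots> = real (card S - 1) * (\<Sum>s\<in>S. (f s)\<^sup>2)"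
    using assms by (cases "card S") (simp_all add: sum.distrib sum_divide_distrib[symmetric] sum_distrib_left
        sum.swap[of "\<lambda>s s'. (f s')\<^sup>2"] algebra_simps)
  finally show ?thesis .
qed

lemma sesquilinear_form_norm_le:
  fixes H :: "'a \<Rightarrow> 'a \<Rightarrow> complex"
  assumes S: "finite S"
    and diag: "\<And>s. s \<in> S \<Longrightarrow> cmod (H s s) \<le> D"
    and off: "\<And>s s'. s \<in> S \<Longrightarrow> s' \<in> S \<Longrightarrow> s \<noteq> s' \<Longrightarrow> cmod (H s s') \<le> E" and "0 \<le> E"
  shows "cmod (\<Sum>s\<in>S. \<Sum>s'\<in>S. c s * cnj (c s') * H s s') \<le> (D + real (card S - 1) * E) * (\<Sum>s\<in>S. (cmod (c s))\<^sup>2)"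
proof -
  have "cmod (\<Sum>s\<in>S. \<Sum>s'\<in>S. c s * cnj (c s') * H s s') \<le> (\<Sum>s\<in>S. \<Sum>s'\<in>S. cmod (c s) * cmod (c s') * cmod (H s s'))"
    by (rule order_trans[OF norm_sum sum_mono], rule order_trans[OF norm_sum sum_mono]) (simp add: norm_mult)
  also have "\<dots> = (\<Sum>s\<in>S. (cmod (c s))\<^sup>2 * cmod (H s s) + (\<Sum>s'\<in>S - {s}. cmod (c s) * cmod (c s') * cmod (H s s')))"
    using S by (intro sum.cong refl) (simp add: sum.remove power2_eq_square)
  also have "\<dots> \<le> (\<Sum>s\<in>S. (cmod (c s))\<^sup>2 * D + (\<Sum>s'\<in>S - {s}. cmod (c s) * cmod (c s') * E))"
    using diag off by (intro sum_mono add_mono mult_left_mono) auto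
  also have "\<dots> = D * (\<Sum>s\<in>S. (cmod (c s))\<^sup>2) + E * (\<Sum>s\<in>S. \<Sum>s'\<in>S - {s}. cmod (c s) * cmod (c s'))"
    by (simp add: sum.distrib sum_distrib_left sum_distrib_right mult_ac)
  also have "\<dots> \<le> D * (\<Sum>s\<in>S. (cmod (c s))\<^sup>2) + E * (real (card S - 1) * (\<Sum>s\<in>S. (cmod (c s))\<^sup>2))"
    using sum_off_diagonal_le[OF S, of "\<lambda>s. cmod (c s)"] \<open>0 \<le> E\<close> by (intro add_left_mono mult_left_mono)
  finally show ?thesis by (simp add: algebra_simps)
qed

section \<open>Tucker subspaces\<close>

lemma unitary_mat_vinner_col:
  assumes "unitary_mat N U" "a < N" "b < N"
  shows "vinner N (col U a) (col U b) = of_bool (a = b)"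
proof -
  have "vinner N (col U a) (col U b) = cnj (\<Sum>k<N. cnj (U k a) * U k b)"
    unfolding vinner_def col_def cnj_sum by simp
  then show ?thesis using assms unfolding unitary_mat_def by simp
qed

lemma vnorm2_unitary_col:
  assumes "unitary_mat N U" "a < N"
  shows "vnorm2 N (col U a) = 1"
  using unitary_mat_vinner_col[OF assms assms(2)] by (simp add: vinner_self)

lemma tucker_basis_gram:
  assumes unitary: "\<forall>j<d. unitary_mat (n j) (U j)" and S: "S \<subseteq> tidx d n" and "s \<in> S" "s' \<in> S"
  shows "(\<Prod>l<d. vinner (n l) (col (U l) (s l)) (col (U l) (s' l))) = of_bool (s = s')"
proof -
  have factor: "vinner (n l) (col (U l) (s l)) (col (U l) (s' l)) = of_bool (s l = s' l)" if "l < d" for l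
    using assms that by (intro unitary_mat_vinner_col) (auto intro: tidx_component_less)
  show ?thesis
  proof (cases "s = s'")
    case False
    then obtain l where "l < d" "s l \<noteq> s' l"
      using assms tidx_neq_imp_component_neq by blast
    then have "vinner (n l) (col (U l) (s l)) (col (U l) (s' l)) = 0" using factor by simp
    then show ?thesis using False \<open>l < d\<close> by (auto intro!: prod_zero)
  next
    case True
    then show ?thesis using factor by (auto intro!: prod.neutral)
  qed
qed

lemma tucker_space_outer_prod_sum:
  assumes "Y \<in> tucker_space d n U S" "S \<subseteq> tidx d n"
  obtains C where "\<forall>i\<in>tidx d n. Y i = (\<Sum>s\<in>S. C s * outer_prod d (\<lambda>l. col (U l) (s l)) i)"
proof -
  obtain C where Y: "Y = multi_mode n U C d" and C: "\<forall>i\<in>tidx d n - S. C i = 0"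
    using assms(1) unfolding tucker_space_def by blast
  have "Y i = (\<Sum>s\<in>S. C s * outer_prod d (\<lambda>l. col (U l) (s l)) i)" if "i \<in> tidx d n" for i
    unfolding Y multi_mode_eq_sum_tidx[OF that] outer_prod_def col_def
    using C assms(2) by (intro sum.mono_neutral_right) auto
  then show thesis using that by blast
qed

lemma finite_coherence_candidates:
  fixes d :: nat
  assumes "finite S"
  shows "finite {cmod (vinner (n l) (col (U l) (i l)) (col (U l) (i' l))) | l i i'. l < d \<and> i \<in> S \<and> i' \<in> S \<and> i \<noteq> i'}"
proof (rule finite_subset)
  show "finite ((\<lambda>(l, i, i'). cmod (vinner (n l) (col (U l) (i l)) (col (U l) (i' l)))) ` ({..<d} \<times> S \<times> S))"
    using assms by (intro finite_imageI finite_cartesian_product) auto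
qed force

lemma coherence_nonneg: "finite S \<Longrightarrow> 0 \<le> coherence d n U S"
  unfolding coherence_def by (simp add: finite_coherence_candidates)

lemma vinner_col_le_coherence:
  fixes d :: nat
  assumes "finite S" "l < d" "i \<in> S" "i' \<in> S" "i \<noteq> i'"
  shows "cmod (vinner (n l) (col (U l) (i l)) (col (U l) (i' l))) \<le> coherence d n U S"
  unfolding coherence_def using assms finite_coherence_candidates[OF assms(1)] by (intro Max_ge) auto

lemma JL_set_col_vinner_error:
  assumes U: "unitary_mat N U" and JL: "JL_embedding \<delta> M N A (JL_set U j S)"
    and s: "s \<in> S" "s' \<in> S" "s j < N" "s' j < N"
  shows "cmod (vinner M (mat_vec N A (col U (s j))) (mat_vec N A (col U (s' j))) - vinner N (col U (s j)) (col U (s' j)))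
    \<le> (if s = s' then \<delta> else 2 * \<delta>)"
proof (cases "s = s'")
  case True
  have "col U (s j) \<in> JL_set U j S"
    using s unfolding JL_set_def by blast
  from JL_embedding_vnorm2_error[OF JL this] show ?thesis
    using True vnorm2_unitary_col[OF U s(3)]
    by (simp add: vinner_self) (metis norm_of_real of_real_1 of_real_diff)
next
  case False
  have "{(\<lambda>a. col U (s j) a + col U (s' j) a), (\<lambda>a. col U (s j) a - col U (s' j) a),
      (\<lambda>a. col U (s j) a + \<i> * col U (s' j) a), (\<lambda>a. col U (s j) a - \<i> * col U (s' j) a)} \<subseteq> JL_set U j S"
    using s False unfolding JL_set_def by blast
  from JL_embedding_vinner_error[OF JL this] show ?thesis
    using False vnorm2_unitary_col[OF U s(3)] vnorm2_unitary_col[OF U s(4)] by simp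
qed

lemma tucker_space_norms_in_coefficients:
  assumes unitary: "\<forall>j<d. unitary_mat (n j) (U j)" and S: "S \<subseteq> tidx d n"
    and Y: "Y \<in> tucker_space d n U S"
  obtains C where "tnorm2 (tidx d n) Y = (\<Sum>s\<in>S. (cmod (C s))\<^sup>2)"
    and "complex_of_real (tnorm2 (tidx d m) (multi_mode n A Y d) - tnorm2 (tidx d n) Y)
      = (\<Sum>s\<in>S. \<Sum>s'\<in>S. C s * cnj (C s') *
          ((\<Prod>l<d. vinner (m l) (mat_vec (n l) (A l) (col (U l) (s l))) (mat_vec (n l) (A l) (col (U l) (s' l))))
           - (\<Prod>l<d. vinner (n l) (col (U l) (s l)) (col (U l) (s' l)))))"
proof -
  define w where "w s l = col (U l) (s l)" for s :: "nat \<Rightarrow> nat" and l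
  define v where "v s l = mat_vec (n l) (A l) (w s l)" for s l
  obtain C where YC: "\<forall>i\<in>tidx d n. Y i = (\<Sum>s\<in>S. C s * outer_prod d (w s) i)"
    using tucker_space_outer_prod_sum[OF Y S] unfolding w_def by blast
  have Y_eq: "tnorm2 (tidx d n) Y = tnorm2 (tidx d n) (\<lambda>i. \<Sum>s\<in>S. C s * outer_prod d (w s) i)"
    unfolding tnorm2_def using YC by simp
  have AY_eq: "tnorm2 (tidx d m) (multi_mode n A Y d) = tnorm2 (tidx d m) (\<lambda>i. \<Sum>s\<in>S. C s * outer_prod d (v s) i)"
    unfolding tnorm2_def v_def by (intro sum.cong refl) (simp add: multi_mode_outer_prod_sum[OF YC, where q = m])
  have "finite S"
    using S by (rule finite_subset) simp
  then have "tnorm2 (tidx d n) Y = (\<Sum>s\<in>S. (cmod (C s))\<^sup>2)"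
    unfolding Y_eq w_def using tucker_basis_gram[OF unitary S] by (rule tnorm2_outer_prod_sum_orthonormal)
  moreover have "complex_of_real (tnorm2 (tidx d m) (multi_mode n A Y d) - tnorm2 (tidx d n) Y)
      = (\<Sum>s\<in>S. \<Sum>s'\<in>S. C s * cnj (C s') *
          ((\<Prod>l<d. vinner (m l) (v s l) (v s' l)) - (\<Prod>l<d. vinner (n l) (w s l) (w s' l))))"
    unfolding of_real_diff AY_eq Y_eq tnorm2_outer_prod_sum sum_subtractf[symmetric] right_diff_distrib ..
  ultimately show thesis
    using that unfolding v_def w_def by blast
qed

theorem tucker_space_JL_norm_error:
  fixes d :: nat
  assumes unitary: "\<forall>j<d. unitary_mat (n j) (U j)" and S: "S \<subseteq> tidx d n" and "0 \<le> \<delta>"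
    and JL: "\<forall>j<d. JL_embedding \<delta> (m j) (n j) (A j) (JL_set (U j) j S)"
    and Y: "Y \<in> tucker_space d n U S"
  shows "\<bar>tnorm2 (tidx d n) Y - tnorm2 (tidx d m) (multi_mode n A Y d)\<bar>
    \<le> ((1 + \<delta>) ^ d - 1 + real (card S - 1) * ((coherence d n U S + 2 * \<delta>) ^ d - coherence d n U S ^ d))
      * tnorm2 (tidx d n) Y"
proof -
  let ?\<mu> = "coherence d n U S"
  define w where "w s l = col (U l) (s l)" for s :: "nat \<Rightarrow> nat" and l
  define v where "v s l = mat_vec (n l) (A l) (w s l)" for s l
  define H where "H s s' = (\<Prod>l<d. vinner (m l) (v s l) (v s' l)) - (\<Prod>l<d. vinner (n l) (w s l) (w s' l))" for s s'
  obtain C where normY: "tnorm2 (tidx d n) Y = (\<Sum>s\<in>S. (cmod (C s))\<^sup>2)"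
    and diff: "complex_of_real (tnorm2 (tidx d m) (multi_mode n A Y d) - tnorm2 (tidx d n) Y)
      = (\<Sum>s\<in>S. \<Sum>s'\<in>S. C s * cnj (C s') * H s s')"
    using tucker_space_norms_in_coefficients[OF unitary S Y] unfolding H_def v_def w_def by blast
  have finS: "finite S"
    using S by (rule finite_subset) simp
  have factor_error: "cmod (vinner (m l) (v s l) (v s' l) - vinner (n l) (w s l) (w s' l)) \<le> (if s = s' then \<delta> else 2 * \<delta>)"
    if "s \<in> S" "s' \<in> S" "l < d" for s s' l
    unfolding v_def w_def using that S unitary JL
    by (intro JL_set_col_vinner_error) (auto intro: tidx_component_less)
  have factor_gram: "vinner (n l) (w s l) (w s' l) = of_bool (s l = s' l)" if "s \<in> S" "s' \<in> S" "l < d" for s s' l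
    unfolding w_def using that S unitary by (intro unitary_mat_vinner_col) (auto intro: tidx_component_less)
  have "cmod (H s s) \<le> (1 + \<delta>) ^ d - 1 ^ d" if "s \<in> S" for s
    unfolding H_def using factor_error[OF that that] factor_gram[OF that that] \<open>0 \<le> \<delta>\<close>
    by (intro norm_prod_diff_le) auto
  moreover have "cmod (H s s') \<le> (?\<mu> + 2 * \<delta>) ^ d - ?\<mu> ^ d" if "s \<in> S" "s' \<in> S" "s \<noteq> s'" for s s'
    unfolding H_def using factor_error[OF that(1,2)] \<open>s \<noteq> s'\<close> vinner_col_le_coherence[OF finS _ that]
      coherence_nonneg[OF finS] \<open>0 \<le> \<delta>\<close>
    by (intro norm_prod_diff_le) (auto simp: w_def)
  moreover have "0 \<le> (?\<mu> + 2 * \<delta>) ^ d - ?\<mu> ^ d"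
    using coherence_nonneg[OF finS] \<open>0 \<le> \<delta>\<close> by (simp add: power_mono)
  ultimately have "cmod (\<Sum>s\<in>S. \<Sum>s'\<in>S. C s * cnj (C s') * H s s')
      \<le> ((1 + \<delta>) ^ d - 1 + real (card S - 1) * ((?\<mu> + 2 * \<delta>) ^ d - ?\<mu> ^ d)) * (\<Sum>s\<in>S. (cmod (C s))\<^sup>2)"
    using sesquilinear_form_norm_le[OF finS] by simp
  then show ?thesis
    unfolding normY[symmetric] diff[symmetric] norm_of_real by (simp add: abs_minus_commute)
qed

section \<open>Numerical estimates\<close>

lemma one_plus_div_power_le:
  assumes "1 \<le> d" "0 \<le> eps" "eps \<le> 2"
  shows "(1 + eps / (4 * real d)) ^ d - 1 \<le> eps / 2"
proof -
  have "(1 + eps / (4 * real d)) ^ d \<le> exp (eps / (4 * real d)) ^ d"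
    using assms by (intro power_mono) auto
  also have "\<dots> = exp (eps / 4)"
    using assms by (simp add: exp_of_nat_mult[symmetric])
  also have "\<dots> \<le> 1 + 2 * (eps / 4)"
    using exp_bound_lemma[of "eps / 4"] assms by simp
  finally show ?thesis by simp
qed

lemma power_diff_le:
  fixes x y :: real
  assumes "0 \<le> y" "y \<le> x"
  shows "x ^ k - y ^ k \<le> real k * (x - y) * x ^ (k - 1)"
proof (induction k)
  case 0
  then show ?case by simp
next
  case (Suc k)
  have "x ^ Suc k - y ^ Suc k = x * (x ^ k - y ^ k) + y ^ k * (x - y)"
    by (simp add: algebra_simps)
  also have "\<dots> \<le> x * (real k * (x - y) * x ^ (k - 1)) + x ^ k * (x - y)"
    using Suc assms by (intro add_mono mult_left_mono mult_right_mono power_mono) auto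
  also have "\<dots> = real (Suc k) * (x - y) * x ^ k"
    by (cases k) (simp_all add: algebra_simps)
  finally show ?case by simp
qed

lemma power_shift_diff_le:
  assumes "1 \<le> d" "0 < eps" "0 \<le> \<mu>"
  shows "(\<mu> + 2 * (eps / (4 * real d))) ^ d - \<mu> ^ d \<le> eps / 2 * exp 1 * max eps \<mu> ^ (d - 1)"
proof -
  let ?M = "max eps \<mu>" and ?q = "1 + 1 / (2 * real d)"
  have "(\<mu> + 2 * (eps / (4 * real d))) ^ d - \<mu> ^ d \<le> eps / 2 * (\<mu> + 2 * (eps / (4 * real d))) ^ (d - 1)"
    using power_diff_le[of \<mu> "\<mu> + 2 * (eps / (4 * real d))" d] assms by simp
  also have "(\<mu> + 2 * (eps / (4 * real d))) ^ (d - 1) \<le> (?M * ?q) ^ (d - 1)"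
    using assms by (intro power_mono) (auto simp: field_simps max_def)
  also have "\<dots> \<le> ?M ^ (d - 1) * exp (real (d - 1) * (1 / (2 * real d)))"
    unfolding power_mult_distrib exp_of_nat_mult
    using assms exp_ge_add_one_self[of "1 / (2 * real d)"] by (intro mult_left_mono power_mono) auto
  also have "\<dots> \<le> ?M ^ (d - 1) * exp 1"
    using assms by (intro mult_left_mono) (auto simp: field_simps of_nat_diff)
  finally show ?thesis
    using assms by (simp add: mult_left_mono mult_ac)
qed

lemma tucker_JL_coefficient_le:
  fixes d r :: nat
  assumes d: "1 \<le> d" and eps: "0 < eps" "eps \<le> 3/4" and \<mu>: "0 \<le> \<mu>"
  shows "(1 + eps / (4 * real d)) ^ d - 1 + real (r - 1) * ((\<mu> + 2 * (eps / (4 * real d))) ^ d - \<mu> ^ d)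
    \<le> (if \<mu> = 0 then (eps + exp 1 * sqrt (real r * (real r - 1)) * eps ^ d) * exp 1
       else eps * (exp 1 + (exp 1)\<^sup>2 * sqrt (real r * (real r - 1)) * max (eps ^ (d - 1)) (\<mu> ^ (d - 1))))"
proof -
  let ?M = "max eps \<mu>" and ?sq = "sqrt (real r * (real r - 1))"
  have r: "real (r - 1) \<le> ?sq"
    by (rule real_le_rsqrt) (cases r, auto simp: power2_eq_square algebra_simps)
  have sq: "0 \<le> ?sq"
    using order_trans[OF of_nat_0_le_iff r] .
  have "0 \<le> (\<mu> + 2 * (eps / (4 * real d))) ^ d - \<mu> ^ d"
    using \<mu> eps by (simp add: power_mono)
  then have "(1 + eps / (4 * real d)) ^ d - 1 + real (r - 1) * ((\<mu> + 2 * (eps / (4 * real d))) ^ d - \<mu> ^ d)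
      \<le> eps / 2 + ?sq * (eps / 2 * exp 1 * ?M ^ (d - 1))"
    using one_plus_div_power_le[OF d] power_shift_diff_le[OF d eps(1) \<mu>] r sq eps
    by (intro add_mono mult_mono) auto
  also have "\<dots> \<le> eps * exp 1 + eps * (exp 1)\<^sup>2 * ?sq * ?M ^ (d - 1)"
  proof -
    define X where "X = eps * exp 1 * (?sq * ?M ^ (d - 1))"
    have "0 \<le> X"
      unfolding X_def using eps sq by simp
    have "X \<le> X * exp 1" "eps \<le> eps * exp 1"
      using mult_left_mono[of 1 "exp 1" X] mult_left_mono[of 1 "exp 1" eps] \<open>0 \<le> X\<close> eps by simp_all
    moreover have "?sq * (eps / 2 * exp 1 * ?M ^ (d - 1)) = X / 2"
      unfolding X_def by (simp add: mult_ac)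
    moreover have "eps * (exp 1)\<^sup>2 * ?sq * ?M ^ (d - 1) = X * exp 1"
      unfolding X_def by (simp add: power2_eq_square mult_ac)
    ultimately show ?thesis
      using \<open>0 \<le> X\<close> eps by linarith
  qed
  also have "\<dots> = (if \<mu> = 0 then (eps + exp 1 * ?sq * eps ^ d) * exp 1
       else eps * (exp 1 + (exp 1)\<^sup>2 * ?sq * max (eps ^ (d - 1)) (\<mu> ^ (d - 1))))"
  proof (cases "\<mu> = 0")
    case True
    then have "eps * ?M ^ (d - 1) = eps ^ d"
      using eps d by (cases d) simp_all
    then show ?thesis
      using True by (simp add: algebra_simps power2_eq_square)
  next
    case False
    have "max (eps ^ (d - 1)) (\<mu> ^ (d - 1)) = ?M ^ (d - 1)"
      using eps \<mu> by (auto simp: max_def power_mono intro: antisym)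
    then show ?thesis
      using False by (simp add: algebra_simps)
  qed
  finally show ?thesis .
qed

theorem corollary3:
  fixes d :: nat and n m :: "nat \<Rightarrow> nat"
    and U A :: "nat \<Rightarrow> nat \<Rightarrow> nat \<Rightarrow> complex"
    and S :: "(nat \<Rightarrow> nat) set" and r :: nat and eps :: real
    and Y :: "(nat \<Rightarrow> nat) \<Rightarrow> complex"
  assumes d: "d \<ge> 1"
    and unitary: "\<forall>j<d. unitary_mat (n j) (U j)"
    and S: "S \<subseteq> tidx d n" and r: "card S = r"
    and eps: "0 < eps" "eps \<le> 3/4"
    and JL: "\<forall>j<d. JL_embedding (eps / (4 * d)) (m j) (n j) (A j) (JL_set (U j) j S)"
    and Y: "Y \<in> tucker_space d n U S"
  shows "\<bar>tnorm2 (tidx d n) Y - tnorm2 (tidx d m) (multi_mode n A Y d)\<bar>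
         \<le> (if coherence d n U S = 0
            then (eps + exp 1 * sqrt (real r * (real r - 1)) * eps ^ d) * exp 1
            else eps * (exp 1 + (exp 1)\<^sup>2 * sqrt (real r * (real r - 1))
                     * max (eps ^ (d - 1)) (coherence d n U S ^ (d - 1))))
           * tnorm2 (tidx d n) Y"
proof -
  have "finite S"
    using S by (rule finite_subset) simp
  have "0 \<le> eps / (4 * real d)"
    using eps by simp
  moreover have "\<forall>j<d. JL_embedding (eps / (4 * real d)) (m j) (n j) (A j) (JL_set (U j) j S)"
    using JL by simp
  ultimately have "\<bar>tnorm2 (tidx d n) Y - tnorm2 (tidx d m) (multi_mode n A Y d)\<bar>
      \<le> ((1 + eps / (4 * real d)) ^ d - 1 + real (r - 1) *
          ((coherence d n U S + 2 * (eps / (4 * real d))) ^ d - coherence d n U S ^ d)) * tnorm2 (tidx d n) Y"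
    using tucker_space_JL_norm_error[OF unitary S _ _ Y] unfolding r by blast
  then show ?thesis
    using tucker_JL_coefficient_le[OF d eps coherence_nonneg[OF \<open>finite S\<close>]] tnorm2_nonneg
    by (rule order_trans[OF _ mult_right_mono])
qed

end
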